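(* Let $H$ be an almost-breakable monoid. If $\mathcal{P}_{\mathrm{fin},1}(H)$ is UmF, then every minimal factorization of every element of $\mathcal{P}_{\mathrm{fin},1}(H)$ is square-free (no irreducible occurs more than once as a letter).
   Context: A monoid $H$ is almost-breakable if for all $x,y\in H$, $xy\in\{x,y\}$ or $yx\in\{x,y\}$. $\mathcal{P}_{\mathrm{fin},1}(H)$ denotes the set of non-empty finite subsets of $H$ containing $1_H$, a monoid under $XY=\{xy:x\in X,y\in Y\}$. In a monoid $M$: $x\mid_M y$ iff $y\in MxM$; $x,y$ are associated if each divides the other; proper divisor means divides but not associated. A unit-divisor divides $1_M$; otherwise it is a non-unit-divisor. An irreducible is a non-unit-divisor $a$ with $a\neq xy$ for all non-unit-divisors $x,y$ properly dividing $a$. A factorization of $x$ is a finite word over the irreducibles with product $x$. For words $\mathfrak a,\mathfrak b$, $\mathfrak a\sqsubseteq\mathfrak b$ means $\mathfrak a$ is, up to associatedness of letters, a subword (subsequence) of some permutation of $\mathfrak b$; equivalence means $\sqsubseteq$ both ways. A factorization $\mathfrak a$ of $x$ is minimal if no factorization $\mathfrak b$ of $x$ satisfies $\mathfrak b\sqsubseteq\mathfrak a\not\sqsubseteq\mathfrak b$. $M$ is UmF if every non-unit-divisor has a factorization and any two minimal factorizations of an element are equivalent. *)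

theory Defs
  imports Main "HOL-Library.Sublist" "HOL-Library.Multiset"
begin

definition almost_breakable :: "('a::monoid_mult) itself \<Rightarrow> bool" where
  "almost_breakable _ \<longleftrightarrow> (\<forall>x y::'a. x * y \<in> {x, y} \<or> y * x \<in> {x, y})"

definition Pfin1 :: "('a::monoid_mult) set set" where
  "Pfin1 = {X. finite X \<and> X \<noteq> {} \<and> 1 \<in> X}"

definition setmul :: "('a::monoid_mult) set \<Rightarrow> 'a set \<Rightarrow> 'a set" where
  "setmul X Y = {x * y | x y. x \<in> X \<and> y \<in> Y}"

definition mdvd :: "'m set \<Rightarrow> ('m \<Rightarrow> 'm \<Rightarrow> 'm) \<Rightarrow> 'm \<Rightarrow> 'm \<Rightarrow> bool" where
  "mdvd M mul x y \<longleftrightarrow> (\<exists>a\<in>M. \<exists>b\<in>M. y = mul (mul a x) b)"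

definition massoc :: "'m set \<Rightarrow> ('m \<Rightarrow> 'm \<Rightarrow> 'm) \<Rightarrow> 'm \<Rightarrow> 'm \<Rightarrow> bool" where
  "massoc M mul x y \<longleftrightarrow> mdvd M mul x y \<and> mdvd M mul y x"

definition proper_mdvd :: "'m set \<Rightarrow> ('m \<Rightarrow> 'm \<Rightarrow> 'm) \<Rightarrow> 'm \<Rightarrow> 'm \<Rightarrow> bool" where
  "proper_mdvd M mul x y \<longleftrightarrow> mdvd M mul x y \<and> \<not> massoc M mul x y"

definition unit_divisor :: "'m set \<Rightarrow> ('m \<Rightarrow> 'm \<Rightarrow> 'm) \<Rightarrow> 'm \<Rightarrow> 'm \<Rightarrow> bool" where
  "unit_divisor M mul e x \<longleftrightarrow> x \<in> M \<and> mdvd M mul x e"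

definition non_unit_divisor :: "'m set \<Rightarrow> ('m \<Rightarrow> 'm \<Rightarrow> 'm) \<Rightarrow> 'm \<Rightarrow> 'm \<Rightarrow> bool" where
  "non_unit_divisor M mul e x \<longleftrightarrow> x \<in> M \<and> \<not> mdvd M mul x e"

definition irreducible_m :: "'m set \<Rightarrow> ('m \<Rightarrow> 'm \<Rightarrow> 'm) \<Rightarrow> 'm \<Rightarrow> 'm \<Rightarrow> bool" where
  "irreducible_m M mul e a \<longleftrightarrow> non_unit_divisor M mul e a \<and>
     \<not> (\<exists>x y. non_unit_divisor M mul e x \<and> non_unit_divisor M mul e y \<and>
             proper_mdvd M mul x a \<and> proper_mdvd M mul y a \<and> a = mul x y)"

definition wprod :: "('m \<Rightarrow> 'm \<Rightarrow> 'm) \<Rightarrow> 'm \<Rightarrow> 'm list \<Rightarrow> 'm" where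
  "wprod mul e w = foldr mul w e"

definition factorization :: "'m set \<Rightarrow> ('m \<Rightarrow> 'm \<Rightarrow> 'm) \<Rightarrow> 'm \<Rightarrow> 'm \<Rightarrow> 'm list \<Rightarrow> bool" where
  "factorization M mul e x w \<longleftrightarrow> (\<forall>a\<in>set w. irreducible_m M mul e a) \<and> wprod mul e w = x"

definition subword_m :: "'m set \<Rightarrow> ('m \<Rightarrow> 'm \<Rightarrow> 'm) \<Rightarrow> 'm list \<Rightarrow> 'm list \<Rightarrow> bool" where
  "subword_m M mul a b \<longleftrightarrow> (\<exists>p c. mset p = mset b \<and> subseq c p \<and> list_all2 (massoc M mul) a c)"

definition equiv_words :: "'m set \<Rightarrow> ('m \<Rightarrow> 'm \<Rightarrow> 'm) \<Rightarrow> 'm list \<Rightarrow> 'm list \<Rightarrow> bool" where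
  "equiv_words M mul a b \<longleftrightarrow> subword_m M mul a b \<and> subword_m M mul b a"

definition minimal_factorization :: "'m set \<Rightarrow> ('m \<Rightarrow> 'm \<Rightarrow> 'm) \<Rightarrow> 'm \<Rightarrow> 'm \<Rightarrow> 'm list \<Rightarrow> bool" where
  "minimal_factorization M mul e x a \<longleftrightarrow> factorization M mul e x a \<and>
     \<not> (\<exists>b. factorization M mul e x b \<and> subword_m M mul b a \<and> \<not> subword_m M mul a b)"

definition UmF :: "'m set \<Rightarrow> ('m \<Rightarrow> 'm \<Rightarrow> 'm) \<Rightarrow> 'm \<Rightarrow> bool" where
  "UmF M mul e \<longleftrightarrow>
     (\<forall>x. non_unit_divisor M mul e x \<longrightarrow> (\<exists>w. factorization M mul e x w)) \<and>
     (\<forall>x\<in>M. \<forall>a b. minimal_factorization M mul e x a \<and> minimal_factorization M mul e x b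
                    \<longrightarrow> equiv_words M mul a b)"

end

theory Submission
  imports Defs
begin

text \<open>
  In \<open>P\<^sub>f\<^sub>i\<^sub>n\<^sub>,\<^sub>1(H)\<close> divisibility is inclusion, so associated elements are equal, the
  order \<open>\<sqsubseteq>\<close> on words is inclusion of multisets, and \<open>{1, x}\<close> is irreducible for \<open>x \<noteq> 1\<close>.
  Hence it suffices to write each \<open>X = {1} \<union> S\<close> as a product of the distinct atoms \<open>{1, x}\<close>,
  \<open>x \<in> S\<close>: by UmF every minimal factorization of \<open>X\<close> lies below this square-free one.

  The product \<open>{1, x\<^sub>1} \<cdots> {1, x\<^sub>n}\<close> is \<open>{1, x\<^sub>1, \<dots>, x\<^sub>n}\<close> as soon as
  \<open>x\<^sub>i x\<^sub>j \<in> {x\<^sub>i, x\<^sub>j}\<close> for \<open>i < j\<close>. Such an enumeration of \<open>S\<close> exists because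
  the relation \<open>x \<prec> y\<close> given by \<open>xy \<in> {x, y}\<close> and \<open>yx \<notin> {x, y}\<close> is acyclic in an
  almost-breakable monoid: along a \<open>\<prec>\<close>-path, runs of steps absorbing to the same side compose,
  and a change of side can be short-cut, so the end points \<open>x, y\<close> of every path satisfy
  \<open>xy \<in> {x, y}\<close>, which is incompatible with \<open>y \<prec> x\<close>.
\<close>

lemma successively_switch:
  "successively P xs \<or> successively (\<lambda>a b. \<not> P a b) xs \<or>
   (\<exists>ys a b c zs. xs = ys @ [a, b, c] @ zs \<and> P a b \<noteq> P b c)"
proof (induction xs rule: induct_list012)
  case (3 x y zs)
  then consider "successively P (y # zs)" | "successively (\<lambda>a b. \<not> P a b) (y # zs)"
    | ys a b c ws where "y # zs = ys @ [a, b, c] @ ws" "P a b \<noteq> P b c"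
    by blast
  then show ?case
  proof cases
    case 3
    then show ?thesis by (metis append_Cons)
  qed (cases zs; cases "P x y"; force)+
qed simp_all

lemma successively_trancl:
  assumes "(x, y) \<in> {(a, b). R a b}\<^sup>+"
  shows "\<exists>xs. successively R (x # xs @ [y])"
  using assms
proof (induction rule: trancl_induct)
  case (base y)
  then have "successively R (x # [] @ [y])" by simp
  then show ?case by blast
next
  case (step y z)
  then obtain xs where "successively R (x # xs @ [y])" by blast
  with step have "successively R ((x # xs @ [y]) @ [z])"
    by (subst successively_append_iff) simp
  then show ?case by (metis append_Cons append_assoc)
qed

lemma subseq_imp_mset_subset: "subseq xs ys \<Longrightarrow> mset xs \<subseteq># mset ys"
  by (induction rule: list_emb.induct) (auto intro: subset_mset.order_trans)

lemma distinct_if_mset_subset: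
  assumes "distinct ys" "mset xs \<subseteq># mset ys"
  shows "distinct xs"
proof -
  obtain zs where "mset ys = mset (xs @ zs)"
    using assms(2) by (metis mset_append mset_subset_eq_exists_conv ex_mset)
  then show ?thesis using assms(1) mset_eq_imp_distinct_iff by fastforce
qed

lemma successively_left_absorbing:
  fixes x y :: "'a::semigroup_mult"
  assumes "successively (\<lambda>a b. a * b = a) (x # xs)" "y \<in> set xs"
  shows "x * y = x"
  using assms
proof (induction xs arbitrary: x)
  case (Cons z xs)
  then have "x * z = x" and "y = z \<or> z * y = z" by auto
  then show ?case by (metis mult.assoc)
qed simp

lemma successively_right_absorbing:
  fixes x y :: "'a::semigroup_mult"
  assumes "successively (\<lambda>a b. a * b = b) (x # xs)" "y \<in> set xs"
  shows "x * y = y"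
  using assms
proof (induction xs arbitrary: x)
  case (Cons z xs)
  then have "x * z = z" and "y = z \<or> z * y = y" by auto
  then show ?case by (metis mult.assoc)
qed simp

lemma mdvd_Pfin1_imp_subset:
  assumes "mdvd (Pfin1 :: 'a::monoid_mult set set) setmul X Y"
  shows "X \<subseteq> Y"
proof
  fix x assume "x \<in> X"
  from assms obtain A B where "A \<in> Pfin1" "B \<in> Pfin1" "Y = setmul (setmul A X) B"
    unfolding mdvd_def by blast
  moreover from this have "1 \<in> A" "1 \<in> B" unfolding Pfin1_def by auto
  ultimately show "x \<in> Y" using \<open>x \<in> X\<close> unfolding setmul_def by force
qed

lemma mdvd_Pfin1_refl: "mdvd (Pfin1 :: 'a::monoid_mult set set) setmul X X"
proof -
  have "{1} \<in> (Pfin1 :: 'a set set)" "X = setmul (setmul {1} X) {1}"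
    unfolding Pfin1_def setmul_def by auto
  then show ?thesis unfolding mdvd_def by blast
qed

lemma massoc_Pfin1_eq: "massoc (Pfin1 :: 'a::monoid_mult set set) setmul = (=)"
  using mdvd_Pfin1_imp_subset mdvd_Pfin1_refl by (auto simp: massoc_def fun_eq_iff)

lemma subword_m_Pfin1_iff:
  "subword_m (Pfin1 :: 'a::monoid_mult set set) setmul a b \<longleftrightarrow> mset a \<subseteq># mset b"
proof
  assume "subword_m Pfin1 setmul a b"
  then obtain p c where "mset p = mset b" "subseq c p" "list_all2 (massoc Pfin1 setmul) a c"
    unfolding subword_m_def by blast
  moreover from this have "a = c" by (simp add: massoc_Pfin1_eq list.rel_eq)
  ultimately show "mset a \<subseteq># mset b" using subseq_imp_mset_subset by fastforce
next
  assume "mset a \<subseteq># mset b"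
  moreover obtain r where "mset r = mset b - mset a" using ex_mset by blast
  ultimately have "mset (a @ r) = mset b" by simp
  moreover have "list_all2 (massoc Pfin1 setmul) a a" by (simp add: massoc_Pfin1_eq list.rel_eq)
  ultimately show "subword_m Pfin1 setmul a b" unfolding subword_m_def by blast
qed

lemma irreducible_m_Pfin1_pair:
  assumes "(x :: 'a::monoid_mult) \<noteq> 1"
  shows "irreducible_m Pfin1 setmul {1} {1, x}"
proof -
  have "{1, x} \<in> (Pfin1 :: 'a set set)" unfolding Pfin1_def by simp
  then have "non_unit_divisor Pfin1 setmul {1} {1, x}"
    unfolding non_unit_divisor_def using mdvd_Pfin1_imp_subset assms by blast
  moreover have "\<not> proper_mdvd Pfin1 setmul U {1, x}"
    if "non_unit_divisor Pfin1 setmul {1} U" for U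
  proof
    assume "proper_mdvd Pfin1 setmul U {1, x}"
    then have "U \<subseteq> {1, x}" "U \<noteq> {1, x}"
      using mdvd_Pfin1_imp_subset by (auto simp: proper_mdvd_def massoc_Pfin1_eq)
    moreover have "1 \<in> U" "U \<noteq> {1}"
      using that mdvd_Pfin1_refl unfolding non_unit_divisor_def Pfin1_def by auto
    ultimately show False by blast
  qed
  ultimately show ?thesis unfolding irreducible_m_def by blast
qed

lemma minimal_factorization_Pfin1_below:
  "factorization (Pfin1 :: 'a::monoid_mult set set) setmul {1} X b \<Longrightarrow>
    \<exists>b'. minimal_factorization Pfin1 setmul {1} X b' \<and> mset b' \<subseteq># mset b"
proof (induction b rule: length_induct)
  case (1 b)
  show ?case
  proof (cases "minimal_factorization Pfin1 setmul {1} X b")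
    case False
    then obtain c where c: "factorization Pfin1 setmul {1} X c" "mset c \<subset># mset b"
      using "1.prems" unfolding minimal_factorization_def subword_m_Pfin1_iff
      by (auto simp: subset_mset.less_le_not_le)
    then have "length c < length b" using mset_subset_size by fastforce
    then show ?thesis using "1.IH" c by (meson subset_mset.less_imp_le subset_mset.order_trans)
  qed blast
qed

lemma UmF_Pfin1_minimal_factorization_subset:
  fixes X :: "'a::monoid_mult set"
  assumes "UmF (Pfin1 :: 'a set set) setmul {1}" "X \<in> Pfin1"
    and "minimal_factorization Pfin1 setmul {1} X w" "factorization Pfin1 setmul {1} X b"
  shows "mset w \<subseteq># mset b"
proof -
  obtain b' where b': "minimal_factorization Pfin1 setmul {1} X b'" "mset b' \<subseteq># mset b"
    using minimal_factorization_Pfin1_below assms(4) by blast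
  have "equiv_words Pfin1 setmul w b'"
    using assms(1) b'(1) assms(2,3) unfolding UmF_def by blast
  with b'(2) show ?thesis
    unfolding equiv_words_def subword_m_Pfin1_iff by (meson subset_mset.order_trans)
qed

lemma setmul_pair_one_insert:
  fixes f :: "'a::monoid_mult"
  assumes "\<forall>y\<in>A. f * y \<in> {f, y}"
  shows "setmul {1, f} (insert 1 A) = insert 1 (insert f A)"
proof (intro equalityI subsetI)
  fix z assume "z \<in> setmul {1, f} (insert 1 A)"
  then obtain u v where "z = u * v" "u \<in> {1, f}" "v \<in> insert 1 A"
    unfolding setmul_def by blast
  then show "z \<in> insert 1 (insert f A)" using assms by auto
next
  fix z assume "z \<in> insert 1 (insert f A)"
  then have "z = 1 * z \<and> z \<in> insert 1 A \<or> z = f * 1" by auto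
  then show "z \<in> setmul {1, f} (insert 1 A)" unfolding setmul_def by blast
qed

definition precedes :: "'a::times \<Rightarrow> 'a \<Rightarrow> bool" where
  "precedes x y \<longleftrightarrow> x * y \<in> {x, y} \<and> y * x \<notin> {x, y}"

context
  assumes almost_breakable: "almost_breakable TYPE('a::monoid_mult)"
begin

lemma breakable: "x * y \<in> {x, y} \<or> y * x \<in> {x, y}" for x y :: 'a
  using almost_breakable unfolding almost_breakable_def by blast

lemma idempotent: "x * x = x" for x :: 'a
  using breakable[of x x] by simp

lemma precedes_shortcut:
  fixes a b c :: 'a
  assumes ab: "precedes a b" and bc: "precedes b c" and switch: "(a * b = a) \<noteq> (b * c = b)"
  shows "precedes a c"
proof -
  from ab bc switch consider "a * b = a" "b * c = c" | "a * b = b" "b * c = b"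
    unfolding precedes_def by auto
  then have "c * a \<notin> {a, c}"
  proof cases
    case 1
    have "b * a \<noteq> a" "c * b \<noteq> c" using ab bc unfolding precedes_def by auto
    then show ?thesis using 1 by (metis insert_iff singletonD mult.assoc)
  next
    case 2
    have "c * b \<noteq> b" "b * a \<noteq> b" using ab bc unfolding precedes_def by auto
    then show ?thesis using 2 by (metis insert_iff singletonD mult.assoc)
  qed
  then show ?thesis using breakable[of a c] unfolding precedes_def by blast
qed

lemma precedes_path_ends:
  fixes xs :: "'a list"
  assumes "successively precedes xs" "xs \<noteq> []"
  shows "hd xs * last xs \<in> {hd xs, last xs}"
  using assms
proof (induction "length xs" arbitrary: xs rule: less_induct)
  case less
  obtain x ys where xs_eq: "xs = x # ys" using less.prems(2) by (cases xs) auto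
  show ?case
  proof (cases "ys = []")
    case True
    then show ?thesis using idempotent unfolding xs_eq by simp
  next
    case False
    then have ends: "hd xs = x" "last xs \<in> set ys" unfolding xs_eq by simp_all
    consider "successively (\<lambda>a b. a * b = a) xs"
      | "successively (\<lambda>a b. a * b \<noteq> a) xs"
      | zs a b c ws where "xs = zs @ [a, b, c] @ ws" "(a * b = a) \<noteq> (b * c = b)"
      using successively_switch by blast
    then show ?thesis
    proof cases
      case 1
      then have "x * last xs = x"
        using successively_left_absorbing ends unfolding xs_eq by blast
      then show ?thesis using ends by simp
    next
      case 2
      with less.prems(1) have "successively (\<lambda>a b. a * b = b) xs"
        unfolding successively_conv_nth precedes_def by auto
      then have "x * last xs = last xs"
        using successively_right_absorbing ends unfolding xs_eq by blast
      then show ?thesis using ends by simp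
    next
      case (3 zs a b c ws)
      define xs' where "xs' = zs @ [a, c] @ ws"
      have "precedes a b" "precedes b c"
        using less.prems(1) unfolding 3(1) by (auto simp: successively_append_iff)
      with 3(2) have "precedes a c" using precedes_shortcut by blast
      then have "successively precedes xs'"
        using less.prems(1) unfolding 3(1) xs'_def by (auto simp: successively_append_iff)
      moreover have "length xs' < length xs" "xs' \<noteq> []" "hd xs' = hd xs" "last xs' = last xs"
        unfolding 3(1) xs'_def by (cases zs; cases ws; simp)+
      ultimately show ?thesis using less.hyps by metis
    qed
  qed
qed

lemma precedes_acyclic: "acyclic {(x :: 'a, y). precedes x y}"
  unfolding acyclic_def
proof (intro allI notI)
  fix x :: 'a
  assume "(x, x) \<in> {(x, y). precedes x y}\<^sup>+"
  then obtain ys where path: "successively precedes (x # ys @ [x])"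
    using successively_trancl[of x x precedes] by blast
  show False
  proof (cases ys)
    case Nil
    then show False using path unfolding precedes_def by simp
  next
    case (Cons y zs)
    with path have "precedes x y" "successively precedes (y # zs @ [x])" by auto
    moreover from this(2) have "y * x \<in> {y, x}"
      using precedes_path_ends[of "y # zs @ [x]"] by simp
    ultimately show False unfolding precedes_def by blast
  qed
qed

lemma finite_exists_leftmost:
  fixes S :: "'a set"
  assumes "finite S" "S \<noteq> {}"
  obtains f where "f \<in> S" "\<forall>y\<in>S. f * y \<in> {f, y}"
proof -
  let ?r = "{(x, y). x \<in> S \<and> y \<in> S \<and> precedes x y}"
  have "finite ?r" using assms(1) by (auto intro: finite_subset[of _ "S \<times> S"])
  moreover have "acyclic ?r" using precedes_acyclic by (rule acyclic_subset) auto
  ultimately have "wf ?r" by (rule finite_acyclic_wf)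
  moreover obtain x where "x \<in> S" using assms(2) by blast
  ultimately obtain f where f: "f \<in> S" "\<And>y. (y, f) \<in> ?r \<Longrightarrow> y \<notin> S"
    by (rule wfE_min) blast
  moreover have "f * y \<in> {f, y}" if "y \<in> S" for y
    using f that breakable[of f y] unfolding precedes_def by blast
  ultimately show ?thesis using that by blast
qed

lemma pair_product_enumeration:
  fixes S :: "'a set"
  assumes "finite S" "1 \<notin> S"
  shows "\<exists>xs. distinct xs \<and> set xs = S \<and>
           wprod setmul {1} (map (\<lambda>x. {1, x}) xs) = insert 1 S"
  using assms(1)
proof (induction rule: finite_remove_induct)
  case empty
  show ?case by (auto simp: wprod_def)
next
  case (remove A)
  then obtain f where f: "f \<in> A" "\<forall>y\<in>A. f * y \<in> {f, y}"
    using finite_exists_leftmost by blast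
  then obtain xs where xs: "distinct xs" "set xs = A - {f}"
      "wprod setmul {1} (map (\<lambda>x. {1, x}) xs) = insert 1 (A - {f})"
    using remove.IH by blast
  have "wprod setmul {1} (map (\<lambda>x. {1, x}) (f # xs)) = setmul {1, f} (insert 1 (A - {f}))"
    using xs(3) by (simp add: wprod_def)
  also have "\<dots> = insert 1 A"
    using f setmul_pair_one_insert[of "A - {f}" f] by (simp add: insert_absorb)
  finally have "wprod setmul {1} (map (\<lambda>x. {1, x}) (f # xs)) = insert 1 A" .
  moreover have "distinct (f # xs)" "set (f # xs) = A" using xs f(1) by auto
  ultimately show ?case by blast
qed

lemma Pfin1_distinct_factorization:
  fixes X :: "'a set"
  assumes "X \<in> Pfin1"
  obtains b where "distinct b" "factorization Pfin1 setmul {1} X b"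
proof -
  have "finite (X - {1})" "1 \<notin> X - {1}" using assms unfolding Pfin1_def by auto
  then obtain xs where xs: "distinct xs" "set xs = X - {1}"
      "wprod setmul {1} (map (\<lambda>x. {1, x}) xs) = insert 1 (X - {1})"
    using pair_product_enumeration by blast
  have "insert 1 (X - {1}) = X" using assms unfolding Pfin1_def by auto
  have "inj_on (\<lambda>x. {1, x}) (set xs)"
    using xs(2) by (auto intro!: inj_onI simp: doubleton_eq_iff)
  then have "distinct (map (\<lambda>x. {1, x}) xs)" using xs(1) by (simp add: distinct_map)
  moreover have "factorization Pfin1 setmul {1} X (map (\<lambda>x. {1, x}) xs)"
    using xs(2,3) \<open>insert 1 (X - {1}) = X\<close> irreducible_m_Pfin1_pair
    unfolding factorization_def by auto
  ultimately show ?thesis using that by blast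
qed

end

theorem corollary4p3:
  assumes "almost_breakable TYPE('a::monoid_mult)"
    and "UmF (Pfin1 :: 'a set set) setmul {1}"
  shows "\<forall>X \<in> (Pfin1 :: 'a set set). \<forall>w.
           minimal_factorization Pfin1 setmul {1} X w \<longrightarrow> distinct w"
proof (intro ballI allI impI)
  fix X :: "'a set" and w
  assume X: "X \<in> Pfin1" and w: "minimal_factorization Pfin1 setmul {1} X w"
  obtain b where b: "distinct b" "factorization Pfin1 setmul {1} X b"
    using Pfin1_distinct_factorization[OF assms(1) X] by blast
  have "mset w \<subseteq># mset b"
    using UmF_Pfin1_minimal_factorization_subset[OF assms(2) X w b(2)] .
  with b(1) show "distinct w" by (rule distinct_if_mset_subset)
qed

end
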